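(* Let $n\ge3$ be an even integer. Then the number of edges of $OD(\mathcal{D}_n)$ is $$|E(OD(\mathcal{D}_n))|=\frac12\Big(2n-1+(n+1)\sum_{\lambda\mid\frac n2}\phi(2\lambda)+\sum_{\substack{m\mid n,\ m>1\\ m\text{ odd}}}\Big(m-2\phi(m)+\sum_{\lambda\mid\frac nm}\phi(\lambda m)\Big)\phi(m)+\sum_{\substack{m\mid n,\ m>2\\ m\text{ even}}}\Big(n+m-2\phi(m)+\sum_{\lambda\mid\frac nm}\phi(\lambda m)\Big)\phi(m)\Big),$$ where $\phi$ is Euler's totient function.
   Context: The dihedral group $\mathcal{D}_n$ ($n\ge3$) is the group $\langle a,b\mid a^n=b^2=(ab)^2=e\rangle$ of order $2n$. For a finite group $G$, $o(x)$ denotes the order of $x\in G$. The order-divisor graph $OD(G)$ is the simple undirected graph with vertex set $G$, in which two distinct vertices $x,y$ are adjacent if and only if $o(x)\neq o(y)$ and either $o(x)\mid o(y)$ or $o(y)\mid o(x)$. *)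

theory Defs
  imports "HOL-Algebra.Algebra" "HOL-Number_Theory.Number_Theory"
begin

text \<open>Concrete model of the dihedral group D_n of order 2n:
  (False, k) represents a^k and (True, k) represents a^k b, for 0 \<le> k < n.
  Multiplication follows from a^n = b^2 = (ab)^2 = e, i.e. b a^j = a^(-j) b.\<close>

definition dihedral_mult :: "nat \<Rightarrow> bool \<times> nat \<Rightarrow> bool \<times> nat \<Rightarrow> bool \<times> nat" where
  "dihedral_mult n x y =
     (case x of (s, i) \<Rightarrow> case y of (t, j) \<Rightarrow>
        if \<not> s then (t, (i + j) mod n)
        else (\<not> t, (i + n - j) mod n))"

definition dihedral :: "nat \<Rightarrow> (bool \<times> nat) monoid" where
  "dihedral n = \<lparr> carrier = UNIV \<times> {0..<n},
                   monoid.mult = dihedral_mult n,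
                   one = (False, 0) \<rparr>"

definition od_adj :: "('a, 'b) monoid_scheme \<Rightarrow> 'a \<Rightarrow> 'a \<Rightarrow> bool" where
  "od_adj G x y \<longleftrightarrow> x \<noteq> y \<and> group.ord G x \<noteq> group.ord G y \<and>
     (group.ord G x dvd group.ord G y \<or> group.ord G y dvd group.ord G x)"

definition od_edges :: "('a, 'b) monoid_scheme \<Rightarrow> 'a set set" where
  "od_edges G = {{x, y} | x y. x \<in> carrier G \<and> y \<in> carrier G \<and> od_adj G x y}"

end

theory Submission
  imports Defs
begin

text \<open>
  In \<open>D\<^sub>n\<close> the rotation \<open>a\<^sup>k\<close> has order \<open>n / gcd n k\<close> and every reflection has order 2,
  so for \<open>d\<close> dividing \<open>n\<close> there are \<open>\<phi>(d)\<close> elements of order \<open>d\<close>, plus the \<open>n\<close> reflections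
  when \<open>d = 2\<close>. Adjacency in \<open>OD(G)\<close> depends only on the orders of the endpoints, so the
  handshake lemma gives \<open>2|E| = \<Sum>\<^sub>d c(d) deg(d)\<close>, where \<open>c(d)\<close> counts the elements of order
  \<open>d\<close> and \<open>deg(d)\<close> sums \<open>c(e)\<close> over the divisors \<open>e \<noteq> d\<close> of \<open>n\<close> comparable with \<open>d\<close>. That
  sum splits into the divisors and the multiples of \<open>d\<close>, both evaluated with
  \<open>\<Sum>\<^bsub>e | d\<^esub> \<phi>(e) = d\<close>; separating \<open>d = 1\<close>, \<open>d = 2\<close>, odd \<open>d\<close> and even \<open>d > 2\<close> yields the formula.
\<close>

lemma card_edges_handshake:
  assumes "finite V" and sym: "\<And>x y. A x y \<Longrightarrow> A y x" and irrefl: "\<And>x. \<not> A x x"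
  shows "2 * card {{x, y} | x y. x \<in> V \<and> y \<in> V \<and> A x y} = (\<Sum>x\<in>V. card {y \<in> V. A x y})"
proof -
  define P where "P = Sigma V (\<lambda>x. {y \<in> V. A x y})"
  define E where "E = {{x, y} | x y. x \<in> V \<and> y \<in> V \<and> A x y}"
  define edge :: "'a \<times> 'a \<Rightarrow> 'a set" where "edge = (\<lambda>(x, y). {x, y})"
  have "finite P" unfolding P_def using assms(1) by auto
  have E: "E = edge ` P"
    unfolding E_def P_def edge_def by auto
  have fibre: "card {p \<in> P. edge p = e} = 2" if edge_e: "e \<in> E" for e
  proof -
    obtain x y where e: "e = {x, y}" and xy: "x \<in> V" "y \<in> V" "A x y"
      using edge_e by (auto simp: E_def)
    have "{p \<in> P. edge p = e} = {(x, y), (y, x)}"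
    proof (intro equalityI subsetI)
      fix p assume "p \<in> {p \<in> P. edge p = e}"
      then obtain a b where "p = (a, b)" "{a, b} = {x, y}"
        unfolding edge_def e by (auto split: prod.splits)
      then show "p \<in> {(x, y), (y, x)}"
        unfolding doubleton_eq_iff by blast
    qed (use xy sym[OF xy(3)] in \<open>auto simp: P_def edge_def e\<close>)
    then show ?thesis
      using xy irrefl[of x] by (cases "x = y") auto
  qed
  have "(\<Sum>x\<in>V. card {y \<in> V. A x y}) = card P"
    unfolding P_def using assms(1) by simp
  also have "\<dots> = (\<Sum>e\<in>E. card {p \<in> P. edge p = e})"
    unfolding card_eq_sum using \<open>finite P\<close> E by (intro sum.group[symmetric]) auto
  also have "\<dots> = 2 * card E"
    using fibre by simp
  finally show ?thesis unfolding E_def ..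
qed

lemma card_edges_by_label:
  fixes f :: "'a \<Rightarrow> 'b"
  assumes "finite V" "finite D" "f ` V \<subseteq> D"
    and sym: "\<And>d e. R d e \<Longrightarrow> R e d" and irrefl: "\<And>d. \<not> R d d"
  shows "2 * card {{x, y} | x y. x \<in> V \<and> y \<in> V \<and> R (f x) (f y)} =
    (\<Sum>d\<in>D. card {x \<in> V. f x = d} * (\<Sum>e \<in> {e \<in> D. R d e}. card {x \<in> V. f x = e}))"
proof -
  define deg where "deg d = (\<Sum>e \<in> {e \<in> D. R d e}. card {x \<in> V. f x = e})" for d
  have degree: "card {y \<in> V. R d (f y)} = deg d" for d
  proof -
    have "card {y \<in> V. R d (f y)} = (\<Sum>e \<in> {e \<in> D. R d e}. card {y \<in> {y \<in> V. R d (f y)}. f y = e})"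
      unfolding card_eq_sum using assms(1-3) by (intro sum.group[symmetric]) auto
    also have "\<dots> = deg d"
      unfolding deg_def by (intro sum.cong refl arg_cong[where f = card]) auto
    finally show ?thesis .
  qed
  have "2 * card {{x, y} | x y. x \<in> V \<and> y \<in> V \<and> R (f x) (f y)} =
      (\<Sum>x\<in>V. card {y \<in> V. R (f x) (f y)})"
    by (rule card_edges_handshake[OF assms(1)]) (erule sym, rule irrefl)
  also have "\<dots> = (\<Sum>x\<in>V. deg (f x))"
    by (simp only: degree)
  also have "\<dots> = (\<Sum>d\<in>D. \<Sum>x \<in> {x \<in> V. f x = d}. deg (f x))"
    using assms(1-3) by (intro sum.group[symmetric]) auto
  also have "\<dots> = (\<Sum>d\<in>D. card {x \<in> V. f x = d} * deg d)"
    by (intro sum.cong) auto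
  finally show ?thesis unfolding deg_def .
qed

lemma nat_dvd_2_iff: "(m :: nat) dvd 2 \<longleftrightarrow> m = 1 \<or> m = 2"
  using prime_nat_iff[of 2] two_is_prime_nat by auto

lemma div_div_self:
  fixes n :: nat
  assumes "0 < n" "e dvd n"
  shows "n div (n div e) = e"
  using assms by (elim dvdE) simp

lemma div_gcd_eq_iff:
  fixes n :: nat
  assumes "0 < n" "d dvd n"
  shows "n div gcd n k = d \<longleftrightarrow> gcd k n = n div d"
proof
  assume "n div gcd n k = d"
  then show "gcd k n = n div d"
    using div_div_self[of n "gcd n k"] assms(1) by (simp add: gcd.commute)
next
  assume "gcd k n = n div d"
  then show "n div gcd n k = d"
    using div_div_self[OF assms] by (simp add: gcd.commute)
qed

lemma card_residues_ord_eq_totient: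
  assumes "0 < n" "d dvd n"
  shows "card {k. k < n \<and> n div gcd n k = d} = totient d"
proof -
  \<comment> \<open>\<open>card_gcd_eq_totient\<close> counts residues in \<open>{0<..n}\<close>, so \<open>0\<close> is moved to \<open>n\<close>\<close>
  define shift where "shift k = (if k = 0 then n else k)" for k
  have image: "shift ` {k. k < n \<and> n div gcd n k = d} = {k \<in> {0<..n}. gcd k n = n div d}"
  proof (intro equalityI subsetI)
    fix k assume "k \<in> shift ` {k. k < n \<and> n div gcd n k = d}"
    then obtain j where j: "j < n" "gcd j n = n div d" "k = shift j"
      using div_gcd_eq_iff[OF assms] by blast
    then show "k \<in> {k \<in> {0<..n}. gcd k n = n div d}"
      by (cases "j = 0") (auto simp: shift_def)
  next
    fix k assume k: "k \<in> {k \<in> {0<..n}. gcd k n = n div d}"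
    show "k \<in> shift ` {k. k < n \<and> n div gcd n k = d}"
    proof (cases "k = n")
      case True
      then show ?thesis
        using k assms div_gcd_eq_iff[OF assms, of 0] by (intro image_eqI[of _ _ 0]) (auto simp: shift_def)
    next
      case False
      then show ?thesis
        using k div_gcd_eq_iff[OF assms, of k] by (intro image_eqI[of _ _ k]) (auto simp: shift_def)
    qed
  qed
  have "inj_on shift {k. k < n \<and> n div gcd n k = d}"
    by (auto simp: inj_on_def shift_def)
  then have "card {k. k < n \<and> n div gcd n k = d} = card {k \<in> {0<..n}. gcd k n = n div d}"
    by (simp only: card_image[symmetric] image)
  also have "\<dots> = totient (n div (n div d))"
    using assms by (intro card_gcd_eq_totient) (auto elim: dvdE)
  also have "n div (n div d) = d"
    using div_div_self[OF assms] .
  finally show ?thesis .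
qed

lemma sum_divisors_multiples_reindex:
  fixes n d :: nat
  assumes "0 < n" "d dvd n"
  shows "(\<Sum>e | e dvd n \<and> d dvd e. g e) = (\<Sum>l | l dvd n div d. g (l * d))"
proof (rule sum.reindex_bij_witness[of _ "\<lambda>l. l * d" "\<lambda>e. e div d"])
  have "0 < d" using assms by (auto intro: gr0I)
  fix l assume "l \<in> {l. l dvd n div d}"
  then show "l * d div d = l" "l * d \<in> {e. e dvd n \<and> d dvd e}"
    using \<open>0 < d\<close> assms(2) by (auto simp: dvd_div_iff_mult)
next
  fix e assume "e \<in> {e. e dvd n \<and> d dvd e}"
  then show "e div d * d = e" "e div d \<in> {l. l dvd n div d}"
    using assms(2) by (auto simp: div_dvd_div)
qed simp

lemma sum_comparable_divisors:
  fixes c :: "nat \<Rightarrow> 'a :: comm_semiring_1"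
  assumes "0 < n" "d dvd n"
  shows "(\<Sum>e | e dvd n \<and> d \<noteq> e \<and> (d dvd e \<or> e dvd d). c e) + 2 * c d =
    (\<Sum>e | e dvd d. c e) + (\<Sum>e | e dvd n \<and> d dvd e. c e)"
proof -
  define below where "below = {e. e dvd d}"
  define above where "above = {e. e dvd n \<and> d dvd e}"
  have "0 < d" using assms by (auto intro: gr0I)
  have fin: "finite below" "finite above"
    using assms \<open>0 < d\<close> by (auto simp: below_def above_def intro: finite_subset[OF _ finite_divisors_nat])
  have "{e. e dvd n \<and> d \<noteq> e \<and> (d dvd e \<or> e dvd d)} = (below - {d}) \<union> (above - {d})"
    using assms(2) by (auto simp: below_def above_def intro: dvd_trans)
  moreover have "(below - {d}) \<inter> (above - {d}) = {}"
    by (auto simp: below_def above_def dvd_antisym)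
  ultimately have "(\<Sum>e | e dvd n \<and> d \<noteq> e \<and> (d dvd e \<or> e dvd d). c e) =
      sum c (below - {d}) + sum c (above - {d})"
    using fin by (simp add: sum.union_disjoint)
  moreover have "d \<in> below" "d \<in> above"
    using assms(2) by (auto simp: below_def above_def)
  ultimately show ?thesis
    using fin by (simp add: sum.remove below_def[symmetric] above_def[symmetric] algebra_simps mult_2_right)
qed

lemma sum_divisors_of_even:
  fixes f :: "nat \<Rightarrow> 'a :: comm_monoid_add"
  assumes "0 < n" "even n"
  shows "(\<Sum>d | d dvd n. f d) =
    f 1 + f 2 + (\<Sum>m | m dvd n \<and> m > 1 \<and> odd m. f m) + (\<Sum>m | m dvd n \<and> m > 2 \<and> even m. f m)"
proof -
  define odds where "odds = {m. m dvd n \<and> m > 1 \<and> odd m}"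
  define evens where "evens = {m. m dvd n \<and> m > 2 \<and> even m}"
  have fin: "finite odds" "finite evens"
    using assms(1) by (auto simp: odds_def evens_def)
  have "{d. d dvd n} = {1, 2} \<union> (odds \<union> evens)"
  proof (intro equalityI subsetI)
    fix d assume "d \<in> {d. d dvd n}"
    moreover have "d \<noteq> 0" using calculation assms(1) by auto
    ultimately show "d \<in> {1, 2} \<union> (odds \<union> evens)"
      by (auto simp: odds_def evens_def)
  qed (use assms(2) in \<open>auto simp: odds_def evens_def\<close>)
  then have "(\<Sum>d | d dvd n. f d) = sum f ({1, 2} \<union> (odds \<union> evens))"
    by (simp only:)
  also have "\<dots> = sum f {1, 2} + sum f (odds \<union> evens)"
    using fin by (intro sum.union_disjoint) (auto simp: odds_def evens_def)
  also have "sum f (odds \<union> evens) = sum f odds + sum f evens"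
    using fin by (rule sum.union_disjoint) (auto simp: odds_def evens_def)
  finally show ?thesis
    by (simp add: odds_def evens_def add.assoc)
qed

text \<open>Reading the second component as an integer removes the truncated subtraction
  of \<open>dihedral_mult\<close>.\<close>

lemma dihedral_mult_eq_int:
  assumes "j < n"
  shows "dihedral_mult n (s, i) (t, j) =
    (s \<noteq> t, nat ((int i + (if s then - int j else int j)) mod int n))"
proof (cases s)
  case True
  have "int (i + n - j) = int i - int j + int n" using assms by simp
  then show ?thesis using True by (simp add: dihedral_mult_def nat_mod_as_int)
qed (simp add: dihedral_mult_def nat_mod_as_int)

lemma dihedral_mult_assoc:
  assumes "j < n" "k < n"
  shows "dihedral_mult n (dihedral_mult n (s, i) (t, j)) (u, k) =
    dihedral_mult n (s, i) (dihedral_mult n (t, j) (u, k))"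
proof -
  have n: "0 < n" using assms by simp
  have "nat (z mod int n) < n" for z
    using n by (simp add: nat_less_iff)
  then show ?thesis
    using assms n by (cases s; cases t) (simp_all add: dihedral_mult_eq_int mod_simps algebra_simps)
qed

lemma carrier_dihedral: "carrier (dihedral n) = UNIV \<times> {0..<n}"
  by (simp add: dihedral_def)

lemma one_dihedral: "\<one>\<^bsub>dihedral n\<^esub> = (False, 0)"
  by (simp add: dihedral_def)

lemma group_dihedral:
  assumes "0 < n"
  shows "group (dihedral n)"
proof (rule groupI)
  fix x assume "x \<in> carrier (dihedral n)"
  then obtain s i where x: "x = (s, i)" "i < n" by (auto simp: carrier_dihedral)
  show "\<exists>y\<in>carrier (dihedral n). y \<otimes>\<^bsub>dihedral n\<^esub> x = \<one>\<^bsub>dihedral n\<^esub>"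
  proof (cases s)
    case True
    then show ?thesis using x
      by (intro bexI[of _ "(True, i)"]) (auto simp: dihedral_def dihedral_mult_def)
  next
    case False
    then show ?thesis using x assms
      by (intro bexI[of _ "(False, (n - i) mod n)"])
        (auto simp: dihedral_def dihedral_mult_def mod_add_left_eq)
  qed
next
  fix x y z assume "x \<in> carrier (dihedral n)" "y \<in> carrier (dihedral n)" "z \<in> carrier (dihedral n)"
  then show "x \<otimes>\<^bsub>dihedral n\<^esub> y \<otimes>\<^bsub>dihedral n\<^esub> z =
    x \<otimes>\<^bsub>dihedral n\<^esub> (y \<otimes>\<^bsub>dihedral n\<^esub> z)"
    by (auto simp: dihedral_def dihedral_mult_assoc)
qed (use assms in \<open>auto simp: dihedral_def dihedral_mult_def\<close>)

text \<open>The generating rotation \<open>a\<close> is written \<open>(False, 1 mod n)\<close> so that it lies in the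
  carrier also for \<open>n = 1\<close>.\<close>

lemma dihedral_rotation_pow:
  assumes "0 < n"
  shows "(False, 1 mod n) [^]\<^bsub>dihedral n\<^esub> (m::nat) = (False, m mod n)"
proof (induction m)
  case (Suc m)
  then show ?case
    by (simp del: of_bool_eq add: dihedral_def dihedral_mult_def mod_Suc_eq)
qed (simp add: dihedral_def)

lemma dihedral_reflection_pow:
  assumes "k < n"
  shows "(True, k) [^]\<^bsub>dihedral n\<^esub> (m::nat) = (if even m then (False, 0) else (True, k))"
  using assms by (induction m) (simp_all add: dihedral_def dihedral_mult_def)

lemma ord_dihedral_rotation:
  assumes "0 < n" "k < n"
  shows "group.ord (dihedral n) (False, k) = n div gcd n k"
proof -
  interpret group "dihedral n" by (rule group_dihedral) fact
  define r where "r = (False, 1 mod n)"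
  have r: "r \<in> carrier (dihedral n)" using assms by (simp add: r_def carrier_dihedral)
  have r_pow: "r [^]\<^bsub>dihedral n\<^esub> m = (False, m mod n)" for m :: nat
    unfolding r_def using assms(1) by (rule dihedral_rotation_pow)
  have "ord r = n"
    using r by (auto simp: ord_unique r_pow one_dihedral)
  moreover have "(False, k) = r [^]\<^bsub>dihedral n\<^esub> k"
    using assms by (simp add: r_pow)
  ultimately show ?thesis
    using r assms by (simp add: ord_pow_gen)
qed

lemma ord_dihedral_reflection:
  assumes "0 < n" "k < n"
  shows "group.ord (dihedral n) (True, k) = 2"
proof -
  interpret group "dihedral n" by (rule group_dihedral) fact
  show ?thesis
    using assms by (simp add: ord_unique carrier_dihedral dihedral_reflection_pow one_dihedral)
qed

lemma ord_dihedral: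
  assumes "0 < n" "k < n"
  shows "group.ord (dihedral n) (s, k) = (if s then 2 else n div gcd n k)"
  using assms by (simp add: ord_dihedral_rotation ord_dihedral_reflection)

lemma ord_dihedral_dvd:
  assumes "even n" "x \<in> carrier (dihedral n)"
  shows "group.ord (dihedral n) x dvd n"
proof -
  obtain s k where x: "x = (s, k)" "k < n" using assms(2) by (auto simp: carrier_dihedral)
  have "n div gcd n k dvd n"
    by (metis dvd_div_mult_self gcd_dvd1 dvd_triv_left)
  moreover have "group.ord (dihedral n) x = (if s then 2 else n div gcd n k)"
    unfolding x(1) using x(2) by (intro ord_dihedral) simp_all
  ultimately show ?thesis
    using assms(1) by (cases s) simp_all
qed

definition dihedral_ord_count :: "nat \<Rightarrow> nat \<Rightarrow> nat" where
  "dihedral_ord_count n d = card {x \<in> carrier (dihedral n). group.ord (dihedral n) x = d}"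

lemma dihedral_ord_count_eq:
  assumes "0 < n" "d dvd n"
  shows "dihedral_ord_count n d = totient d + (if d = 2 then n else 0)"
proof -
  have classes: "{x \<in> carrier (dihedral n). group.ord (dihedral n) x = d} =
      Pair False ` {k. k < n \<and> n div gcd n k = d} \<union> (if d = 2 then {True} \<times> {0..<n} else {})"
    using assms(1) by (auto simp: carrier_dihedral ord_dihedral)
  have "card (Pair False ` {k. k < n \<and> n div gcd n k = d}) = totient d"
    by (subst card_image) (simp_all add: inj_on_def card_residues_ord_eq_totient[OF assms])
  then show ?thesis
    unfolding dihedral_ord_count_def classes
    by (subst card_Un_disjoint) (auto simp: card_cartesian_product)
qed

lemma sum_dihedral_ord_count_divisors:
  assumes "0 < n" "even n" "d dvd n"
  shows "(\<Sum>e | e dvd d. dihedral_ord_count n e) = d + (if even d then n else 0)"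
proof -
  have "0 < d" using assms by (auto intro: gr0I)
  have "(\<Sum>e | e dvd d. dihedral_ord_count n e) = (\<Sum>e | e dvd d. totient e + (if e = 2 then n else 0))"
    using assms by (intro sum.cong refl) (simp add: dihedral_ord_count_eq dvd_trans[of _ d n])
  also have "\<dots> = d + (if even d then n else 0)"
    using \<open>0 < d\<close> by (simp add: sum.distrib totient_divisor_sum finite_divisors_nat)
  finally show ?thesis .
qed

lemma sum_dihedral_ord_count_multiples:
  assumes "0 < n" "even n" "d dvd n"
  shows "(\<Sum>e | e dvd n \<and> d dvd e. dihedral_ord_count n e) =
    (\<Sum>l | l dvd n div d. totient (l * d)) + (if d dvd 2 then n else 0)"
proof -
  have "(\<Sum>e | e dvd n \<and> d dvd e. dihedral_ord_count n e) =
      (\<Sum>e | e dvd n \<and> d dvd e. totient e + (if e = 2 then n else 0))"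
    using assms by (intro sum.cong refl) (simp add: dihedral_ord_count_eq)
  also have "\<dots> = (\<Sum>e | e dvd n \<and> d dvd e. totient e) + (if d dvd 2 then n else 0)"
    using assms by (simp add: sum.distrib)
  also have "(\<Sum>e | e dvd n \<and> d dvd e. totient e) = (\<Sum>l | l dvd n div d. totient (l * d))"
    using assms by (simp add: sum_divisors_multiples_reindex)
  finally show ?thesis .
qed

definition dihedral_od_degree :: "nat \<Rightarrow> nat \<Rightarrow> nat" where
  "dihedral_od_degree n d =
    (\<Sum>e | e dvd n \<and> d \<noteq> e \<and> (d dvd e \<or> e dvd d). dihedral_ord_count n e)"

lemma card_od_edges_dihedral:
  assumes "0 < n" "even n"
  shows "2 * card (od_edges (dihedral n)) =
    (\<Sum>d | d dvd n. dihedral_ord_count n d * dihedral_od_degree n d)"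
proof -
  define G where "G = dihedral n"
  define comparable where "comparable d e \<longleftrightarrow> d \<noteq> e \<and> (d dvd e \<or> e dvd d)" for d e :: nat
  have "od_adj G x y \<longleftrightarrow> comparable (group.ord G x) (group.ord G y)" for x y
    unfolding od_adj_def comparable_def by auto
  then have edges: "od_edges G =
      {{x, y} | x y. x \<in> carrier G \<and> y \<in> carrier G \<and> comparable (group.ord G x) (group.ord G y)}"
    by (simp only: od_edges_def)
  have "2 * card {{x, y} | x y. x \<in> carrier G \<and> y \<in> carrier G \<and> comparable (group.ord G x) (group.ord G y)} =
      (\<Sum>d \<in> {d. d dvd n}. card {x \<in> carrier G. group.ord G x = d} *
        (\<Sum>e \<in> {e \<in> {d. d dvd n}. comparable d e}. card {x \<in> carrier G. group.ord G x = e}))"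
  proof (rule card_edges_by_label)
    show "group.ord G ` carrier G \<subseteq> {d. d dvd n}"
      using assms(2) ord_dihedral_dvd unfolding G_def by blast
    show "finite (carrier G)"
      by (simp add: G_def carrier_dihedral)
  qed (use assms(1) in \<open>auto simp: comparable_def\<close>)
  moreover have "{e \<in> {d. d dvd n}. comparable d e} = {e. e dvd n \<and> d \<noteq> e \<and> (d dvd e \<or> e dvd d)}" for d
    by (auto simp: comparable_def)
  ultimately show ?thesis
    unfolding dihedral_od_degree_def dihedral_ord_count_def G_def[symmetric] edges by simp
qed

lemma dihedral_od_degree_eq:
  assumes "0 < n" "even n" "d dvd n"
  shows "real (dihedral_od_degree n d) =
    real d + (if even d then real n else 0) + (if d dvd 2 then real n else 0)
    + (\<Sum>l | l dvd n div d. real (totient (l * d))) - 2 * real (dihedral_ord_count n d)"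
proof -
  have "dihedral_od_degree n d + 2 * dihedral_ord_count n d =
      d + (if even d then n else 0) + ((\<Sum>l | l dvd n div d. totient (l * d)) + (if d dvd 2 then n else 0))"
    unfolding dihedral_od_degree_def
    using sum_comparable_divisors[OF assms(1,3), where c = "dihedral_ord_count n"]
      sum_dihedral_ord_count_divisors[OF assms] sum_dihedral_ord_count_multiples[OF assms] by simp
  then have "real (dihedral_od_degree n d + 2 * dihedral_ord_count n d) =
      real (d + (if even d then n else 0) + ((\<Sum>l | l dvd n div d. totient (l * d)) + (if d dvd 2 then n else 0)))"
    by (rule arg_cong)
  then show ?thesis
    by (simp add: of_nat_sum algebra_simps)
qed

lemma dihedral_od_term:
  assumes "0 < n" "even n" "d dvd n"
  shows "real (dihedral_ord_count n d * dihedral_od_degree n d) =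
    (real (totient d) + (if d = 2 then real n else 0)) *
      (real d + (if even d then real n else 0) + (if d = 1 \<or> d = 2 then real n else 0)
       + (\<Sum>l | l dvd n div d. real (totient (l * d)))
       - 2 * (real (totient d) + (if d = 2 then real n else 0)))"
proof -
  have "real (dihedral_ord_count n d) = real (totient d) + (if d = 2 then real n else 0)"
    using dihedral_ord_count_eq[OF assms(1,3)] by simp
  then show ?thesis
    by (simp only: of_nat_mult dihedral_od_degree_eq[OF assms] nat_dvd_2_iff)
qed

lemma dihedral_od_term_odd:
  assumes "0 < n" "even n" "m dvd n" "1 < m" "odd m"
  shows "real (dihedral_ord_count n m * dihedral_od_degree n m) =
    (real m - 2 * real (totient m) + (\<Sum>l\<in>{l. l dvd n div m}. real (totient (l * m)))) * real (totient m)"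
proof -
  have "m \<noteq> 1" "m \<noteq> 2" using assms(4,5) by auto
  with assms(5) show ?thesis
    unfolding dihedral_od_term[OF assms(1-3)] by (simp add: algebra_simps)
qed

lemma dihedral_od_term_even:
  assumes "0 < n" "even n" "m dvd n" "2 < m" "even m"
  shows "real (dihedral_ord_count n m * dihedral_od_degree n m) =
    (real n + real m - 2 * real (totient m) + (\<Sum>l\<in>{l. l dvd n div m}. real (totient (l * m)))) * real (totient m)"
proof -
  have "m \<noteq> 1" "m \<noteq> 2" using assms(4) by auto
  with assms(5) show ?thesis
    unfolding dihedral_od_term[OF assms(1-3)] by (simp add: algebra_simps)
qed

theorem mainTheorem20:
  fixes n :: nat
  assumes "n \<ge> 3" and "even n"
  shows "real (card (od_edges (dihedral n))) =
    (1/2) * (2 * real n - 1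
      + (real n + 1) * (\<Sum>l\<in>{l. l dvd n div 2}. real (totient (2 * l)))
      + (\<Sum>m\<in>{m. m dvd n \<and> m > 1 \<and> odd m}.
           (real m - 2 * real (totient m)
            + (\<Sum>l\<in>{l. l dvd n div m}. real (totient (l * m)))) * real (totient m))
      + (\<Sum>m\<in>{m. m dvd n \<and> m > 2 \<and> even m}.
           (real n + real m - 2 * real (totient m)
            + (\<Sum>l\<in>{l. l dvd n div m}. real (totient (l * m)))) * real (totient m)))"
proof -
  have n: "0 < n" using assms(1) by simp
  define T where "T d = real (dihedral_ord_count n d * dihedral_od_degree n d)" for d
  have "2 * real (card (od_edges (dihedral n))) = (\<Sum>d | d dvd n. T d)"
    unfolding T_def of_nat_sum[symmetric] card_od_edges_dihedral[OF n assms(2), symmetric] by simp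
  also have "\<dots> = T 1 + T 2 + (\<Sum>m | m dvd n \<and> m > 1 \<and> odd m. T m) + (\<Sum>m | m dvd n \<and> m > 2 \<and> even m. T m)"
    using n assms(2) by (rule sum_divisors_of_even)
  also have "T 1 = 2 * real n - 1"
    unfolding T_def dihedral_od_term[OF n assms(2) one_dvd]
    by (simp add: totient_divisor_sum flip: of_nat_sum)
  also have "T 2 = (real n + 1) * (\<Sum>l\<in>{l. l dvd n div 2}. real (totient (2 * l)))"
    unfolding T_def dihedral_od_term[OF n assms(2) assms(2)]
    by (simp add: mult.commute[of _ 2])
  also have "(\<Sum>m | m dvd n \<and> m > 1 \<and> odd m. T m) = (\<Sum>m | m dvd n \<and> m > 1 \<and> odd m.
      (real m - 2 * real (totient m) + (\<Sum>l\<in>{l. l dvd n div m}. real (totient (l * m)))) * real (totient m))"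
    unfolding T_def using n assms(2) by (intro sum.cong refl dihedral_od_term_odd) auto
  also have "(\<Sum>m | m dvd n \<and> m > 2 \<and> even m. T m) = (\<Sum>m | m dvd n \<and> m > 2 \<and> even m.
      (real n + real m - 2 * real (totient m) + (\<Sum>l\<in>{l. l dvd n div m}. real (totient (l * m)))) * real (totient m))"
    unfolding T_def using n assms(2) by (intro sum.cong refl dihedral_od_term_even) auto
  finally show ?thesis
    by simp
qed

end
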